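(* Let $a\in(0,2)$, $\gamma\in(0,a)$ and $p\in\big(\frac{2}{2-\gamma},\frac{2}{2-a}\big)$. There exists a constant $C_{\gamma,p,a}>0$ such that for any $F^2\in\mathcal P_{\rm sym}(\mathbb R^2\times\mathbb R^2)$, $$\int_{\mathbb R^2\times\mathbb R^2}|x_1-x_2|^{-\gamma}F^2(dx_1,dx_2)\le C_{\gamma,p,a}\Big(1+\mathcal I^2_a(F^2)^{1-\frac2a\left(\frac1p-\frac{2-a}{2}\right)}\Big).$$
   Context: $\mathcal P_{\rm sym}(\mathbb R^2\times\mathbb R^2)$: probability measures invariant under swapping the two $\mathbb R^2$ components. With $\Phi(x,y)=(x-y)(\ln x-\ln y)$, for $G$ a density on $\mathbb R^{2N}$ and $X^x_k=(x_1,\dots,x_{k-1},x,x_{k+1},\dots,x_N)$, $\mathcal I^N_a(G)=\frac{1}{2N}\sum_{k=1}^N\int_{\mathbb R^{2(N-1)}}\int_{\mathbb R^2\times\mathbb R^2}\frac{\Phi(G(X_k^x),G(X_k^y))}{|x-y|^{2+a}}dxdy\prod_{j\ne k}dx_j$ (used here with $N=2$). *)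

theory Defs
  imports "HOL-Probability.Probability"
begin

text \<open>Points of R^2 are modelled as real \<times> real (Euclidean norm).
  Phi(u,v) = (u - v)(ln u - ln v), extended to [0,\<infinity>] by its natural limits:
  Phi(u,u) = 0, Phi = \<infinity> if exactly one argument is 0 (or \<infinity>).\<close>
definition Phi :: "ennreal \<Rightarrow> ennreal \<Rightarrow> ennreal" where
  "Phi u v = (if u = v then 0
      else if u = 0 \<or> v = 0 \<or> u = \<infinity> \<or> v = \<infinity> then \<infinity>
      else ennreal ((enn2real u - enn2real v) * (ln (enn2real u) - ln (enn2real v))))"

text \<open>The functional I^N_a for N = 2, applied to a density G on R^2 \<times> R^2:
  (1/(2N)) * sum over k = 1,2 of the triple integral.\<close>
definition Ia2_density :: "real \<Rightarrow> ((real \<times> real) \<times> (real \<times> real) \<Rightarrow> ennreal) \<Rightarrow> ennreal" where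
  "Ia2_density a G = ennreal (1 / 4) *
     ((\<integral>\<^sup>+ x2. \<integral>\<^sup>+ x. \<integral>\<^sup>+ y.
         Phi (G (x, x2)) (G (y, x2)) * ennreal (1 / norm (x - y) powr (2 + a)) \<partial>lborel \<partial>lborel \<partial>lborel)
    + (\<integral>\<^sup>+ x1. \<integral>\<^sup>+ x. \<integral>\<^sup>+ y.
         Phi (G (x1, x)) (G (x1, y)) * ennreal (1 / norm (x - y) powr (2 + a)) \<partial>lborel \<partial>lborel \<partial>lborel))"

definition Ia2 :: "real \<Rightarrow> ((real \<times> real) \<times> (real \<times> real)) measure \<Rightarrow> ennreal" where
  "Ia2 a F = (if absolutely_continuous lborel F then Ia2_density a (RN_deriv lborel F) else \<infinity>)"

definition Psym :: "((real \<times> real) \<times> (real \<times> real)) measure \<Rightarrow> bool" where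
  "Psym F \<longleftrightarrow> prob_space F \<and> sets F = sets borel \<and>
     distr F borel (\<lambda>(x, y). (y, x)) = F"

end

theory Submission
  imports Defs
begin

text \<open>Fix the second particle at z and write f for the density of the first one. Around z take the
  annuli A_n = {r rho^-n \<le> |x - z| < r rho^(1-n)}. The pointwise inequality u \<le> Phi(u, v) + 3 v,
  integrated over x \<in> A_(n+1), y \<in> A_n, where the kernel |x - y|^-(2+a) is bounded below,
  compares the masses of f on neighbouring annuli. Choosing rho^(2-gamma) = 6, the weighted masses
  t_n = (r rho^-n)^-gamma \<integral>_(A_n) f satisfy t_(n+1) \<le> t_n / 2 + beta^n K r^(a-gamma) E(f) with
  beta = rho^(gamma-a) < 1, so \<integral> |x - z|^-gamma f \<le> r^-gamma \<integral> f + \<Sum> t_n is at most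
  C (r^-gamma \<integral> f + r^(a-gamma) E(f)). Integrating in z bounds the moment by
  C (r^-gamma + r^(a-gamma) I), where I = I^2_a(F), and r = I^(-1/a) gives C I^(gamma/a), which is
  dominated by the claimed power of I because p > 2/(2-gamma).\<close>

lemma measurable_Phi[measurable]: "(\<lambda>(u, v). Phi u v) \<in> borel_measurable (borel \<Otimes>\<^sub>M borel)"
  unfolding Phi_def by measurable

lemma borel_measurable_Phi[measurable]:
  assumes [measurable]: "f \<in> borel_measurable M" "g \<in> borel_measurable M"
  shows "(\<lambda>x. Phi (f x) (g x)) \<in> borel_measurable M"
  using measurable_compose[OF measurable_Pair[OF assms] measurable_Phi] by simp

lemma le_Phi_plus_3: "u \<le> Phi u v + 3 * v"
proof (cases "u = v \<or> u = 0 \<or> v = 0 \<or> u = \<infinity> \<or> v = \<infinity>")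
  case True
  have "v \<le> 3 * v"
    using mult_right_mono[of 1 3 v] by simp
  with True show ?thesis unfolding Phi_def
    by (auto simp: ennreal_mult_top add_increasing2)
next
  case False
  then obtain x y where x: "u = ennreal x" "0 < x" and y: "v = ennreal y" "0 < y" and "x \<noteq> y"
    by (cases u; cases v) auto
  then have Phi_eq: "Phi u v = ennreal ((x - y) * (ln x - ln y))"
    unfolding Phi_def by simp
  show ?thesis
  proof (cases "x \<le> 3 * y")
    case True
    then have "ennreal x \<le> ennreal (3 * y)"
      by (rule ennreal_leI)
    then have "u \<le> 3 * v"
      using x y by (simp add: ennreal_mult)
    then show ?thesis by (meson add_increasing zero_le order_trans)
  next
    case False
    have "1 \<le> ln (3::real)"
      using exp_le ln_le_cancel_iff[of "exp 1" 3] by simp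
    also have "ln 3 < ln (x / y)"
      using False x y by (simp add: field_simps)
    also have "\<dots> = ln x - ln y"
      using x y by (simp add: ln_div)
    finally have ln_gt: "1 < ln x - ln y" .
    have "x - 3 * y \<le> (x - 3 * y) * (ln x - ln y)"
      using ln_gt False by (simp add: mult_le_cancel_left1)
    also have "\<dots> \<le> (x - y) * (ln x - ln y)"
      using ln_gt y by (intro mult_right_mono) auto
    finally have "ennreal x \<le> ennreal ((x - y) * (ln x - ln y) + 3 * y)"
      by (intro ennreal_leI) simp
    moreover have "0 \<le> (x - y) * (ln x - ln y)"
      using ln_gt False y by simp
    ultimately show ?thesis
      using Phi_eq x y by (simp add: ennreal_plus ennreal_mult)
  qed
qed

lemma le_Phi_kernel_plus_3:
  assumes "0 < d" "d \<le> D" "0 \<le> s"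
  shows "u \<le> ennreal (D powr s) * (Phi u v * ennreal (1 / d powr s)) + 3 * v"
proof -
  have "1 \<le> D powr s / d powr s"
    using assms by (simp add: powr_mono2)
  then have "1 \<le> ennreal (D powr s) * ennreal (1 / d powr s)"
    using assms by (simp add: ennreal_mult[symmetric] ennreal_1[symmetric] del: ennreal_1)
  then have "Phi u v * 1 \<le> Phi u v * (ennreal (D powr s) * ennreal (1 / d powr s))"
    by (rule mult_left_mono) simp
  then have "Phi u v \<le> ennreal (D powr s) * (Phi u v * ennreal (1 / d powr s))"
    by (simp add: mult.left_commute)
  then show ?thesis
    using le_Phi_plus_3[of u v] by (meson add_right_mono order_trans)
qed

definition Phi_energy :: "real \<Rightarrow> ('a::euclidean_space \<Rightarrow> ennreal) \<Rightarrow> ennreal" where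
  "Phi_energy a f =
     (\<integral>\<^sup>+x. \<integral>\<^sup>+y. Phi (f x) (f y) * ennreal (1 / norm (x - y) powr (2 + a)) \<partial>lborel \<partial>lborel)"

lemma Phi_energy_pair_bound:
  fixes f :: "'a::euclidean_space \<Rightarrow> ennreal"
  assumes [measurable]: "f \<in> borel_measurable lborel"
    and AB_sets[measurable]: "A \<in> sets lborel" "B \<in> sets lborel"
    and "0 \<le> 2 + a"
    and AB: "\<And>x y. x \<in> A \<Longrightarrow> y \<in> B \<Longrightarrow> 0 < norm (x - y) \<and> norm (x - y) \<le> D"
  shows "emeasure lborel B * (\<integral>\<^sup>+x\<in>A. f x \<partial>lborel)
    \<le> ennreal (D powr (2 + a)) * Phi_energy a f + 3 * emeasure lborel A * (\<integral>\<^sup>+y\<in>B. f y \<partial>lborel)"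
proof -
  define g where "g x y = Phi (f x) (f y) * ennreal (1 / norm (x - y) powr (2 + a))" for x y :: 'a
  have [measurable]: "(\<lambda>z. g (fst z) (snd z)) \<in> borel_measurable (lborel \<Otimes>\<^sub>M lborel)"
    unfolding g_def by measurable
  have "emeasure lborel B * (\<integral>\<^sup>+x\<in>A. f x \<partial>lborel)
      = (\<integral>\<^sup>+x. f x * indicator A x * emeasure lborel B \<partial>lborel)"
    by (subst nn_integral_multc) (auto simp: mult.commute)
  also have "\<dots> = (\<integral>\<^sup>+x. \<integral>\<^sup>+y. f x * indicator A x * indicator B y \<partial>lborel \<partial>lborel)"
    using AB_sets by (simp add: nn_integral_cmult_indicator)
  also have "\<dots> \<le> (\<integral>\<^sup>+x. \<integral>\<^sup>+y. ennreal (D powr (2 + a)) * g x y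
      + 3 * (f y * indicator B y) * indicator A x \<partial>lborel \<partial>lborel)"
    using AB unfolding g_def
    by (intro nn_integral_mono) (auto simp: indicator_def intro!: le_Phi_kernel_plus_3 \<open>0 \<le> 2 + a\<close>)
  also have "\<dots> = (\<integral>\<^sup>+x. ennreal (D powr (2 + a)) * (\<integral>\<^sup>+y. g x y \<partial>lborel)
      + 3 * (\<integral>\<^sup>+y\<in>B. f y \<partial>lborel) * indicator A x \<partial>lborel)"
  proof (rule nn_integral_cong)
    fix x
    have [measurable]: "(\<lambda>y. g x y) \<in> borel_measurable lborel"
      unfolding g_def by measurable
    show "(\<integral>\<^sup>+y. ennreal (D powr (2 + a)) * g x y + 3 * (f y * indicator B y) * indicator A x \<partial>lborel)
        = ennreal (D powr (2 + a)) * (\<integral>\<^sup>+y. g x y \<partial>lborel) + 3 * (\<integral>\<^sup>+y\<in>B. f y \<partial>lborel) * indicator A x"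
      by (subst nn_integral_add) (auto simp: nn_integral_cmult nn_integral_multc)
  qed
  also have "\<dots> = ennreal (D powr (2 + a)) * Phi_energy a f + 3 * emeasure lborel A * (\<integral>\<^sup>+y\<in>B. f y \<partial>lborel)"
    unfolding Phi_energy_def g_def[symmetric] using AB_sets
    by (subst nn_integral_add) (simp_all add: nn_integral_cmult nn_integral_multc mult_ac)
  finally show ?thesis .
qed

definition annulus :: "'a::metric_space \<Rightarrow> real \<Rightarrow> real \<Rightarrow> 'a set" where
  "annulus z s t = ball z t - ball z s"

lemma mem_annulus: "x \<in> annulus z s t \<longleftrightarrow> s \<le> norm (x - z) \<and> norm (x - z) < t"
  by (auto simp: annulus_def dist_norm norm_minus_commute)

lemma sets_annulus[measurable]: "annulus z s t \<in> sets borel"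
  unfolding annulus_def by simp

lemma emeasure_annulus:
  fixes z :: "'a::euclidean_space"
  assumes "0 \<le> s" "s \<le> t"
  shows "emeasure lborel (annulus z s t) = ennreal (unit_ball_vol DIM('a) * (t ^ DIM('a) - s ^ DIM('a)))"
proof -
  have "emeasure lborel (annulus z s t) = emeasure lborel (ball z t) - emeasure lborel (ball z s)"
    unfolding annulus_def using assms emeasure_lborel_ball_finite[of z s]
    by (intro emeasure_Diff) auto
  also have "\<dots> = ennreal (unit_ball_vol DIM('a) * (t ^ DIM('a) - s ^ DIM('a)))"
    using assms power_mono[OF assms(2,1)]
    by (simp add: emeasure_ball ennreal_minus[symmetric] right_diff_distrib mult_left_mono)
  finally show ?thesis .
qed

lemma emeasure_annulus_plane:
  fixes z :: "real \<times> real"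
  assumes "0 \<le> s" "s \<le> t"
  shows "emeasure lborel (annulus z s t) = ennreal (pi * (t\<^sup>2 - s\<^sup>2))"
  using assms by (simp add: emeasure_annulus DIM_prod unit_ball_vol_2 power2_eq_square)

lemma annuli_dist_bound:
  assumes "x \<in> annulus z s t" "y \<in> annulus z t t'"
  shows "0 < norm (x - y) \<and> norm (x - y) \<le> t + t'"
proof -
  have "norm (x - z) < t" "t \<le> norm (y - z)" "norm (y - z) < t'"
    using assms by (auto simp: mem_annulus)
  moreover have "norm (y - z) - norm (x - z) \<le> norm (x - y)"
    using norm_triangle_ineq2[of "y - z" "x - z"] by (simp add: norm_minus_commute)
  moreover have "norm (x - y) \<le> norm (x - z) + norm (y - z)"
    using norm_triangle_ineq4[of "x - z" "y - z"] by simp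
  ultimately show ?thesis
    by linarith
qed

lemma annulus_pair_bound:
  fixes f :: "real \<times> real \<Rightarrow> ennreal" and z :: "real \<times> real"
  assumes f: "f \<in> borel_measurable lborel" and "0 \<le> 2 + a" "1 < \<rho>" "0 < u"
  shows "ennreal (pi * (\<rho>\<^sup>2 - 1) * u\<^sup>2) * (\<integral>\<^sup>+x\<in>annulus z (u / \<rho>) u. f x \<partial>lborel)
    \<le> ennreal ((2 * \<rho> * u) powr (2 + a)) * Phi_energy a f
      + ennreal (3 * (pi * (\<rho>\<^sup>2 - 1) * u\<^sup>2 / \<rho>\<^sup>2)) * (\<integral>\<^sup>+x\<in>annulus z u (u * \<rho>). f x \<partial>lborel)"
proof -
  have "u / \<rho> \<le> u" "u \<le> u * \<rho>" "u + u * \<rho> \<le> 2 * \<rho> * u"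
    using assms by (simp_all add: field_simps)
  then have inner: "emeasure lborel (annulus z (u / \<rho>) u) = ennreal (pi * (\<rho>\<^sup>2 - 1) * u\<^sup>2 / \<rho>\<^sup>2)"
    and outer: "emeasure lborel (annulus z u (u * \<rho>)) = ennreal (pi * (\<rho>\<^sup>2 - 1) * u\<^sup>2)"
    using assms by (simp_all add: emeasure_annulus_plane field_simps power_mult_distrib)
  have close: "0 < norm (x - y) \<and> norm (x - y) \<le> 2 * \<rho> * u"
    if "x \<in> annulus z (u / \<rho>) u" "y \<in> annulus z u (u * \<rho>)" for x y
    using annuli_dist_bound[OF that] \<open>u + u * \<rho> \<le> 2 * \<rho> * u\<close> by linarith
  have three: "3 * ennreal (pi * (\<rho>\<^sup>2 - 1) * u\<^sup>2 / \<rho>\<^sup>2) = ennreal (3 * (pi * (\<rho>\<^sup>2 - 1) * u\<^sup>2 / \<rho>\<^sup>2))"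
    using assms by (subst ennreal_mult) (auto simp: less_imp_le one_less_power)
  have "emeasure lborel (annulus z u (u * \<rho>)) * (\<integral>\<^sup>+x\<in>annulus z (u / \<rho>) u. f x \<partial>lborel)
      \<le> ennreal ((2 * \<rho> * u) powr (2 + a)) * Phi_energy a f
        + 3 * emeasure lborel (annulus z (u / \<rho>) u) * (\<integral>\<^sup>+x\<in>annulus z u (u * \<rho>). f x \<partial>lborel)"
    by (rule Phi_energy_pair_bound[OF f _ _ \<open>0 \<le> 2 + a\<close> close]) simp_all
  then show ?thesis
    unfolding inner outer three .
qed

lemma annulus_mass_step:
  fixes f :: "real \<times> real \<Rightarrow> ennreal" and z :: "real \<times> real"
  assumes f: "f \<in> borel_measurable lborel"
    and a: "0 \<le> 2 + a" and \<rho>: "1 < \<rho>" "\<rho> powr (2 - \<gamma>) = 6" and u: "0 < u"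
  shows "ennreal ((u / \<rho>) powr - \<gamma>) * (\<integral>\<^sup>+x\<in>annulus z (u / \<rho>) u. f x \<partial>lborel)
    \<le> ennreal (\<rho> powr \<gamma> * (2 * \<rho>) powr (2 + a) / (pi * (\<rho>\<^sup>2 - 1)) * u powr (a - \<gamma>)) * Phi_energy a f
      + ennreal (1 / 2) * (ennreal (u powr - \<gamma>) * (\<integral>\<^sup>+x\<in>annulus z u (u * \<rho>). f x \<partial>lborel))"
proof -
  define V where "V = pi * (\<rho>\<^sup>2 - 1)"
  define c where "c = (u / \<rho>) powr - \<gamma> / (V * u\<^sup>2)"
  have V: "0 < V"
    unfolding V_def using \<rho> by (simp add: one_less_power)
  have shrink: "(u / \<rho>) powr - \<gamma> = \<rho> powr \<gamma> * u powr - \<gamma>"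
    using \<rho> u by (subst powr_divide) (auto simp: powr_minus field_simps)
  have mass: "c * (V * u\<^sup>2) = (u / \<rho>) powr - \<gamma>"
    unfolding c_def using V u by simp
  have "u powr - \<gamma> * u powr (2 + a) = u powr 2 * u powr (a - \<gamma>)"
    by (simp add: powr_add[symmetric] algebra_simps)
  then have energy:
    "c * (2 * \<rho> * u) powr (2 + a) = \<rho> powr \<gamma> * (2 * \<rho>) powr (2 + a) / (pi * (\<rho>\<^sup>2 - 1)) * u powr (a - \<gamma>)"
    unfolding c_def shrink V_def[symmetric] using \<rho> u V by (simp add: powr_mult field_simps)
  \<comment> \<open>This is where \<open>\<rho> powr (2 - \<gamma>) = 6\<close> is needed: it makes the outer coefficient exactly 1/2.\<close>
  have "\<rho>\<^sup>2 = 6 * \<rho> powr \<gamma>"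
    using powr_add[of \<rho> "2 - \<gamma>" \<gamma>] \<rho> by simp
  then have half: "c * (3 * (V * u\<^sup>2 / \<rho>\<^sup>2)) = 1 / 2 * u powr - \<gamma>"
    using mass shrink \<rho> by (simp add: field_simps)
  have "0 \<le> c"
    unfolding c_def using V by simp
  then have cmult: "ennreal c * (ennreal x * S) = ennreal (c * x) * S" for x S
    by (simp add: ennreal_mult' mult.assoc)
  have half_split: "ennreal (1 / 2 * u powr - \<gamma>) * S = ennreal (1 / 2) * (ennreal (u powr - \<gamma>) * S)" for S
    by (subst ennreal_mult) (auto simp: mult.assoc)
  have "ennreal c * (ennreal (V * u\<^sup>2) * (\<integral>\<^sup>+x\<in>annulus z (u / \<rho>) u. f x \<partial>lborel))
      \<le> ennreal c * (ennreal ((2 * \<rho> * u) powr (2 + a)) * Phi_energy a f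
        + ennreal (3 * (V * u\<^sup>2 / \<rho>\<^sup>2)) * (\<integral>\<^sup>+x\<in>annulus z u (u * \<rho>). f x \<partial>lborel))"
    using annulus_pair_bound[OF f a \<rho>(1) u] unfolding V_def[symmetric] by (rule mult_left_mono) simp
  then show ?thesis
    unfolding distrib_left cmult mass energy half half_split .
qed

lemma exists_annulus_index:
  fixes \<rho> r d :: real
  assumes "1 < \<rho>" "0 < d" "d < r"
  shows "\<exists>n. r / \<rho> ^ n \<le> d \<and> d < r / \<rho> ^ n * \<rho>"
proof -
  define n where "n = (LEAST n. r / \<rho> ^ n \<le> d)"
  obtain N where "r / d < \<rho> ^ N"
    using real_arch_pow[OF assms(1)] by blast
  then have "r / \<rho> ^ N \<le> d"
    using assms by (simp add: field_simps)
  then have le: "r / \<rho> ^ n \<le> d"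
    unfolding n_def by (rule LeastI)
  have "n \<noteq> 0"
    using le assms by (intro notI) simp
  then have "\<not> r / \<rho> ^ (n - 1) \<le> d"
    unfolding n_def by (intro not_less_Least) simp
  then have "d < r / \<rho> ^ n * \<rho>"
    using \<open>n \<noteq> 0\<close> assms(1) by (cases n) auto
  with le show ?thesis by blast
qed

lemma dist_powr_le_annuli_sum:
  fixes z x :: "'a::real_normed_vector"
  assumes "1 < \<rho>" "0 < r" "0 \<le> \<gamma>"
  shows "ennreal (norm (x - z) powr - \<gamma>)
    \<le> ennreal (r powr - \<gamma>)
      + (\<Sum>n. ennreal ((r / \<rho> ^ n) powr - \<gamma>) * indicator (annulus z (r / \<rho> ^ n) (r / \<rho> ^ n * \<rho>)) x)"
proof (cases "r \<le> norm (x - z)")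
  case True
  then have "norm (x - z) powr - \<gamma> \<le> r powr - \<gamma>"
    using assms by (intro powr_mono2') auto
  then show ?thesis
    by (intro add_increasing2 ennreal_leI) auto
next
  case False
  define F where "F n = ennreal ((r / \<rho> ^ n) powr - \<gamma>) * indicator (annulus z (r / \<rho> ^ n) (r / \<rho> ^ n * \<rho>)) x"
    for n
  have "ennreal (norm (x - z) powr - \<gamma>) \<le> suminf F"
  proof (cases "x = z")
    case False
    then obtain n where n: "r / \<rho> ^ n \<le> norm (x - z)" "norm (x - z) < r / \<rho> ^ n * \<rho>"
      using exists_annulus_index[OF assms(1), of "norm (x - z)" r] \<open>\<not> r \<le> norm (x - z)\<close> by auto
    then have "norm (x - z) powr - \<gamma> \<le> (r / \<rho> ^ n) powr - \<gamma>"
      using assms by (intro powr_mono2') auto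
    then have "ennreal (norm (x - z) powr - \<gamma>) \<le> F n"
      unfolding F_def using n by (simp add: mem_annulus ennreal_leI)
    also have "\<dots> \<le> suminf F"
      using sum_le_suminf[of F "{n}"] by simp
    finally show ?thesis .
  qed simp
  then show ?thesis
    unfolding F_def by (simp add: add_increasing)
qed

lemma nn_integral_dist_powr_le_annuli_sum:
  fixes f :: "'a::euclidean_space \<Rightarrow> ennreal"
  assumes [measurable]: "f \<in> borel_measurable lborel" and "1 < \<rho>" "0 < r" "0 \<le> \<gamma>"
  shows "(\<integral>\<^sup>+x. ennreal (norm (x - z) powr - \<gamma>) * f x \<partial>lborel)
    \<le> ennreal (r powr - \<gamma>) * (\<integral>\<^sup>+x. f x \<partial>lborel)
      + (\<Sum>n. ennreal ((r / \<rho> ^ n) powr - \<gamma>) * (\<integral>\<^sup>+x\<in>annulus z (r / \<rho> ^ n) (r / \<rho> ^ n * \<rho>). f x \<partial>lborel))"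
proof -
  have "(\<integral>\<^sup>+x. ennreal (norm (x - z) powr - \<gamma>) * f x \<partial>lborel)
      \<le> (\<integral>\<^sup>+x. ennreal (r powr - \<gamma>) * f x
          + (\<Sum>n. ennreal ((r / \<rho> ^ n) powr - \<gamma>) * (f x * indicator (annulus z (r / \<rho> ^ n) (r / \<rho> ^ n * \<rho>)) x))
          \<partial>lborel)"
  proof (rule nn_integral_mono)
    fix x
    have "ennreal (norm (x - z) powr - \<gamma>) * f x
        \<le> (ennreal (r powr - \<gamma>)
          + (\<Sum>n. ennreal ((r / \<rho> ^ n) powr - \<gamma>) * indicator (annulus z (r / \<rho> ^ n) (r / \<rho> ^ n * \<rho>)) x))
          * f x"
      using dist_powr_le_annuli_sum[OF assms(2-4)] by (rule mult_right_mono) simp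
    then show "ennreal (norm (x - z) powr - \<gamma>) * f x
        \<le> ennreal (r powr - \<gamma>) * f x
          + (\<Sum>n. ennreal ((r / \<rho> ^ n) powr - \<gamma>) * (f x * indicator (annulus z (r / \<rho> ^ n) (r / \<rho> ^ n * \<rho>)) x))"
      by (simp add: distrib_left mult_ac)
  qed
  also have "\<dots> = ennreal (r powr - \<gamma>) * (\<integral>\<^sup>+x. f x \<partial>lborel)
      + (\<Sum>n. ennreal ((r / \<rho> ^ n) powr - \<gamma>) * (\<integral>\<^sup>+x\<in>annulus z (r / \<rho> ^ n) (r / \<rho> ^ n * \<rho>). f x \<partial>lborel))"
    by (subst nn_integral_add) (auto simp: nn_integral_suminf nn_integral_cmult)
  finally show ?thesis .
qed

lemma halving_recursion_le_geometric:
  fixes t :: "nat \<Rightarrow> ennreal"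
  assumes "0 \<le> \<beta>"
    and rec: "\<And>n. t (Suc n) \<le> ennreal (\<beta> ^ n) * B + ennreal (1 / 2) * t n"
  shows "t n \<le> ennreal (max \<beta> (3 / 4) ^ n) * (t 0 + 4 * B)"
proof (induction n)
  case 0
  then show ?case by simp
next
  case (Suc n)
  define q where "q = max \<beta> (3 / 4)"
  define X where "X = t 0 + 4 * B"
  have q: "\<beta> \<le> q" "3 / 4 \<le> q"
    unfolding q_def by auto
  have "B = ennreal (1 / 4) * (4 * B)"
    by (simp add: mult.assoc[symmetric] ennreal_numeral[symmetric] ennreal_mult[symmetric]
        del: ennreal_numeral)
  also have "\<dots> \<le> ennreal (1 / 4) * X"
    unfolding X_def by (intro mult_left_mono) auto
  finally have "B \<le> ennreal (1 / 4) * X" .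
  then have "t (Suc n) \<le> ennreal (q ^ n) * (ennreal (1 / 4) * X) + ennreal (1 / 2) * (ennreal (q ^ n) * X)"
    using rec[of n] Suc.IH q assms(1) unfolding q_def[symmetric] X_def[symmetric]
    by (elim order_trans) (intro add_mono mult_mono ennreal_leI power_mono; simp)
  also have "\<dots> = ennreal (q ^ n) * (ennreal (1 / 4) + ennreal (1 / 2)) * X"
    by (simp add: distrib_left distrib_right mult_ac)
  also have "ennreal (1 / 4) + ennreal (1 / 2) = ennreal (3 / 4)"
    by (subst ennreal_plus[symmetric]) auto
  also have "ennreal (q ^ n) * ennreal (3 / 4) * X \<le> ennreal (q ^ Suc n) * X"
    using q by (intro mult_right_mono) (auto simp: ennreal_mult[symmetric] intro!: ennreal_leI)
  finally show ?case
    unfolding q_def X_def .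
qed

lemma suminf_le_of_halving_recursion:
  fixes t :: "nat \<Rightarrow> ennreal"
  assumes "0 \<le> \<beta>" "\<beta> < 1"
    and "\<And>n. t (Suc n) \<le> ennreal (\<beta> ^ n) * B + ennreal (1 / 2) * t n"
  shows "(\<Sum>n. t n) \<le> ennreal (1 / (1 - max \<beta> (3 / 4))) * (t 0 + 4 * B)"
proof -
  have "(\<Sum>n. t n) \<le> (\<Sum>n. ennreal (max \<beta> (3 / 4) ^ n) * (t 0 + 4 * B))"
    using halving_recursion_le_geometric[OF assms(1,3)] by (intro suminf_le) auto
  also have "\<dots> = (\<Sum>n. ennreal (max \<beta> (3 / 4) ^ n)) * (t 0 + 4 * B)"
    by (simp add: mult.commute)
  also have "(\<Sum>n. ennreal (max \<beta> (3 / 4) ^ n)) = ennreal (1 / (1 - max \<beta> (3 / 4)))"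
    using assms(2) by (subst suminf_ennreal2) (auto simp: suminf_geometric summable_geometric)
  finally show ?thesis .
qed

lemma powr_divide_power:
  fixes \<rho> r s :: real
  assumes "0 < \<rho>"
  shows "(r / \<rho> ^ n) powr s = (\<rho> powr - s) ^ n * r powr s"
proof -
  have "(\<rho> ^ n) powr s = (\<rho> powr s) ^ n"
    using assms by (simp add: powr_realpow[symmetric] powr_powr powr_power mult.commute)
  then show ?thesis
    unfolding powr_divide by (simp add: powr_minus power_inverse divide_inverse mult.commute)
qed

lemma suminf_annuli_mass_le:
  fixes f :: "real \<times> real \<Rightarrow> ennreal" and z :: "real \<times> real"
  assumes f: "f \<in> borel_measurable lborel"
    and \<gamma>: "0 \<le> \<gamma>" "\<gamma> < a" and \<rho>: "1 < \<rho>" "\<rho> powr (2 - \<gamma>) = 6" and r: "0 < r"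
  shows "(\<Sum>n. ennreal ((r / \<rho> ^ n) powr - \<gamma>) * (\<integral>\<^sup>+x\<in>annulus z (r / \<rho> ^ n) (r / \<rho> ^ n * \<rho>). f x \<partial>lborel))
    \<le> ennreal (1 / (1 - max (\<rho> powr (\<gamma> - a)) (3 / 4)))
      * (ennreal (r powr - \<gamma>) * (\<integral>\<^sup>+x. f x \<partial>lborel)
        + 4 * (ennreal (\<rho> powr \<gamma> * (2 * \<rho>) powr (2 + a) / (pi * (\<rho>\<^sup>2 - 1)) * r powr (a - \<gamma>)) * Phi_energy a f))"
proof -
  define K where "K = \<rho> powr \<gamma> * (2 * \<rho>) powr (2 + a) / (pi * (\<rho>\<^sup>2 - 1))"
  have K: "0 \<le> K"
    unfolding K_def using \<rho> by (simp add: one_less_power less_imp_le)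
  define u where "u n = r / \<rho> ^ n" for n
  define t where "t n = ennreal (u n powr - \<gamma>) * (\<integral>\<^sup>+x\<in>annulus z (u n) (u n * \<rho>). f x \<partial>lborel)"
    for n
  have u: "0 < u n" "u n / \<rho> = u (Suc n)" "u (Suc n) * \<rho> = u n" for n
    unfolding u_def using r \<rho> by auto
  have "0 < \<rho>"
    using \<rho> by simp
  have "t (Suc n) \<le> ennreal ((\<rho> powr (\<gamma> - a)) ^ n) * (ennreal (K * r powr (a - \<gamma>)) * Phi_energy a f)
      + ennreal (1 / 2) * t n" for n
  proof -
    have "ennreal (K * u n powr (a - \<gamma>)) = ennreal ((\<rho> powr (\<gamma> - a)) ^ n) * ennreal (K * r powr (a - \<gamma>))"
      unfolding u_def powr_divide_power[OF \<open>0 < \<rho>\<close>]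
      using K by (simp add: ennreal_mult[symmetric] mult_ac)
    then show ?thesis
      using annulus_mass_step[where a = a and z = z, OF f _ \<rho> u(1)[of n]] \<gamma>
      unfolding t_def u(2,3) K_def[symmetric] by (simp add: mult.assoc)
  qed
  then have "(\<Sum>n. t n) \<le> ennreal (1 / (1 - max (\<rho> powr (\<gamma> - a)) (3 / 4)))
      * (t 0 + 4 * (ennreal (K * r powr (a - \<gamma>)) * Phi_energy a f))"
    using \<rho> \<gamma> by (intro suminf_le_of_halving_recursion) (auto simp: powr_less_one)
  also have "t 0 \<le> ennreal (r powr - \<gamma>) * (\<integral>\<^sup>+x. f x \<partial>lborel)"
    unfolding t_def u_def by (auto simp: indicator_def intro!: mult_left_mono nn_integral_mono)
  finally show ?thesis
    unfolding t_def u_def K_def by (simp add: add_right_mono mult_left_mono)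
qed

lemma dist_powr_moment_le_Phi_energy:
  fixes a \<gamma> :: real
  assumes \<gamma>: "0 \<le> \<gamma>" "\<gamma> < a" "\<gamma> < 2"
  obtains C where "0 \<le> C"
    and "\<And>(f :: real \<times> real \<Rightarrow> ennreal) z r. f \<in> borel_measurable lborel \<Longrightarrow> 0 < r \<Longrightarrow>
      (\<integral>\<^sup>+x. ennreal (norm (x - z) powr - \<gamma>) * f x \<partial>lborel)
        \<le> ennreal (C * r powr - \<gamma>) * (\<integral>\<^sup>+x. f x \<partial>lborel) + ennreal (C * r powr (a - \<gamma>)) * Phi_energy a f"
proof -
  define \<rho> where "\<rho> = 6 powr (1 / (2 - \<gamma>))"
  have \<rho>: "1 < \<rho>" "\<rho> powr (2 - \<gamma>) = 6"
    unfolding \<rho>_def using \<gamma> by (auto simp: powr_powr)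
  define K where "K = \<rho> powr \<gamma> * (2 * \<rho>) powr (2 + a) / (pi * (\<rho>\<^sup>2 - 1))"
  define L where "L = 1 / (1 - max (\<rho> powr (\<gamma> - a)) (3 / 4))"
  have K: "0 \<le> K" and L: "0 \<le> L"
    unfolding K_def L_def using \<rho> \<gamma> by (simp_all add: one_less_power less_imp_le powr_less_one)
  define C where "C = 1 + L + 4 * L * K"
  show ?thesis
  proof (rule that)
    show "0 \<le> C"
      unfolding C_def using K L by simp
    fix f :: "real \<times> real \<Rightarrow> ennreal" and z :: "real \<times> real" and r :: real
    assume f: "f \<in> borel_measurable lborel" and r: "0 < r"
    define m where "m = (\<integral>\<^sup>+x. f x \<partial>lborel)"
    define R where "R = r powr (a - \<gamma>)"
    have "(\<integral>\<^sup>+x. ennreal (norm (x - z) powr - \<gamma>) * f x \<partial>lborel)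
        \<le> ennreal (r powr - \<gamma>) * m + ennreal L * (ennreal (r powr - \<gamma>) * m + 4 * (ennreal (K * R) * Phi_energy a f))"
      using nn_integral_dist_powr_le_annuli_sum[OF f \<rho>(1) r \<gamma>(1), of z]
        suminf_annuli_mass_le[OF f \<gamma>(1,2) \<rho> r, of z]
      unfolding m_def R_def K_def L_def by (meson add_left_mono order_trans)
    also have "\<dots> = ennreal ((1 + L) * r powr - \<gamma>) * m + ennreal (4 * L * K * R) * Phi_energy a f"
      using K L unfolding R_def
      by (simp add: distrib_left distrib_right ennreal_mult ennreal_plus mult_ac add_ac)
    also have "\<dots> \<le> ennreal (C * r powr - \<gamma>) * m + ennreal (C * R) * Phi_energy a f"
      using K L unfolding R_def by (intro add_mono mult_right_mono ennreal_leI) (auto simp: C_def)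
    finally show "(\<integral>\<^sup>+x. ennreal (norm (x - z) powr - \<gamma>) * f x \<partial>lborel)
        \<le> ennreal (C * r powr - \<gamma>) * (\<integral>\<^sup>+x. f x \<partial>lborel) + ennreal (C * r powr (a - \<gamma>)) * Phi_energy a f"
      unfolding m_def R_def .
  qed
qed

text \<open>The value on the diagonal is irrelevant: the diagonal is a null set for every absolutely
  continuous F, and I^2_a(F) is infinite otherwise.\<close>

definition dist_powr_weight :: "real \<Rightarrow> 'a::real_normed_vector \<times> 'a \<Rightarrow> ennreal" where
  "dist_powr_weight \<gamma> w = (if fst w = snd w then \<infinity> else ennreal (norm (fst w - snd w) powr - \<gamma>))"

lemma borel_measurable_dist_powr_weight[measurable]:
  "dist_powr_weight \<gamma> \<in> borel_measurable (lborel \<Otimes>\<^sub>M (lborel :: 'a::euclidean_space measure))"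
  unfolding dist_powr_weight_def by measurable

lemma nn_integral_pair_moment_le:
  fixes G :: "(real \<times> real) \<times> (real \<times> real) \<Rightarrow> ennreal"
  assumes G[measurable]: "G \<in> borel_measurable lborel"
    and slice_bound: "\<And>z. (\<integral>\<^sup>+x. ennreal (norm (x - z) powr - \<gamma>) * G (x, z) \<partial>lborel)
      \<le> c1 * (\<integral>\<^sup>+x. G (x, z) \<partial>lborel) + c2 * Phi_energy a (\<lambda>x. G (x, z))"
  shows "(\<integral>\<^sup>+w. G w * dist_powr_weight \<gamma> w \<partial>lborel)
    \<le> c1 * (\<integral>\<^sup>+w. G w \<partial>lborel) + c2 * (\<integral>\<^sup>+z. Phi_energy a (\<lambda>x. G (x, z)) \<partial>lborel)"
proof -
  have [measurable]: "G \<in> borel_measurable (lborel \<Otimes>\<^sub>M lborel)"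
    using G by (simp add: lborel_prod)
  have [measurable]: "(\<lambda>z. Phi_energy a (\<lambda>x. G (x, z))) \<in> borel_measurable lborel"
    unfolding Phi_energy_def by measurable
  have "(\<integral>\<^sup>+w. G w * dist_powr_weight \<gamma> w \<partial>lborel)
      = (\<integral>\<^sup>+w. G w * dist_powr_weight \<gamma> w \<partial>(lborel \<Otimes>\<^sub>M lborel))"
    by (simp add: lborel_prod)
  also have "\<dots> = (\<integral>\<^sup>+z. \<integral>\<^sup>+x. G (x, z) * dist_powr_weight \<gamma> (x, z) \<partial>lborel \<partial>lborel)"
    by (rule lborel_pair.nn_integral_snd[symmetric]) measurable
  also have "\<dots> = (\<integral>\<^sup>+z. \<integral>\<^sup>+x. ennreal (norm (x - z) powr - \<gamma>) * G (x, z) \<partial>lborel \<partial>lborel)"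
    by (intro nn_integral_cong nn_integral_cong_AE eventually_mono[OF AE_lborel_singleton])
      (auto simp: dist_powr_weight_def mult.commute)
  also have "\<dots> \<le> (\<integral>\<^sup>+z. c1 * (\<integral>\<^sup>+x. G (x, z) \<partial>lborel) + c2 * Phi_energy a (\<lambda>x. G (x, z)) \<partial>lborel)"
    by (intro nn_integral_mono slice_bound)
  also have "\<dots> = c1 * (\<integral>\<^sup>+w. G w \<partial>lborel) + c2 * (\<integral>\<^sup>+z. Phi_energy a (\<lambda>x. G (x, z)) \<partial>lborel)"
    by (simp add: nn_integral_add nn_integral_cmult lborel_pair.nn_integral_snd lborel_prod)
  finally show ?thesis .
qed

lemma nn_integral_Phi_energy_slices_le_Ia2_density:
  "(\<integral>\<^sup>+z. Phi_energy a (\<lambda>x. G (x, z)) \<partial>lborel) \<le> 4 * Ia2_density a G"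
proof -
  have "4 * Ia2_density a G = (\<integral>\<^sup>+z. Phi_energy a (\<lambda>x. G (x, z)) \<partial>lborel)
      + (\<integral>\<^sup>+ x1. \<integral>\<^sup>+ x. \<integral>\<^sup>+ y. Phi (G (x1, x)) (G (x1, y)) * ennreal (1 / norm (x - y) powr (2 + a))
           \<partial>lborel \<partial>lborel \<partial>lborel)"
    unfolding Ia2_density_def Phi_energy_def
    by (simp add: mult.assoc[symmetric] ennreal_numeral[symmetric] ennreal_mult[symmetric]
        del: ennreal_numeral)
  then show ?thesis
    by simp
qed

lemma Psym_RN_deriv:
  assumes "Psym F" "absolutely_continuous lborel F"
  shows "(\<integral>\<^sup>+w. RN_deriv lborel F w \<partial>lborel) = 1"
    and "h \<in> borel_measurable lborel \<Longrightarrow> (\<integral>\<^sup>+w. h w \<partial>F) = (\<integral>\<^sup>+w. RN_deriv lborel F w * h w \<partial>lborel)"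
proof -
  have sets: "sets F = sets lborel" and "prob_space F"
    using assms(1) unfolding Psym_def by auto
  have dens: "density lborel (RN_deriv lborel F) = F"
    using sigma_finite_lborel assms(2) sets by (rule sigma_finite_measure.density_RN_deriv)
  have "(\<integral>\<^sup>+w. RN_deriv lborel F w \<partial>lborel) = emeasure (density lborel (RN_deriv lborel F)) UNIV"
    by (simp add: emeasure_density)
  also have "\<dots> = 1"
    unfolding dens using prob_space.emeasure_space_1[OF \<open>prob_space F\<close>] sets_eq_imp_space_eq[OF sets]
    by simp
  finally show "(\<integral>\<^sup>+w. RN_deriv lborel F w \<partial>lborel) = 1" .
  show "(\<integral>\<^sup>+w. h w \<partial>F) = (\<integral>\<^sup>+w. RN_deriv lborel F w * h w \<partial>lborel)"
    if "h \<in> borel_measurable lborel"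
    using that by (subst dens[symmetric]) (simp add: nn_integral_density)
qed

lemma Psym_moment_le:
  fixes a \<gamma> :: real
  assumes "0 \<le> \<gamma>" "\<gamma> < a" "\<gamma> < 2"
  obtains C where "0 \<le> C"
    and "\<And>F r. Psym F \<Longrightarrow> absolutely_continuous lborel F \<Longrightarrow> 0 < r \<Longrightarrow>
      (\<integral>\<^sup>+w. dist_powr_weight \<gamma> w \<partial>F)
        \<le> ennreal (C * r powr - \<gamma>) + ennreal (C * r powr (a - \<gamma>)) * (4 * Ia2 a F)"
proof -
  obtain C where "0 \<le> C" and bound: "\<And>(f :: real \<times> real \<Rightarrow> ennreal) z r.
      f \<in> borel_measurable lborel \<Longrightarrow> 0 < r \<Longrightarrow>
      (\<integral>\<^sup>+x. ennreal (norm (x - z) powr - \<gamma>) * f x \<partial>lborel)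
        \<le> ennreal (C * r powr - \<gamma>) * (\<integral>\<^sup>+x. f x \<partial>lborel) + ennreal (C * r powr (a - \<gamma>)) * Phi_energy a f"
    by (rule dist_powr_moment_le_Phi_energy[OF assms]) (rule that)
  show ?thesis
  proof (rule that[OF \<open>0 \<le> C\<close>])
    fix F :: "((real \<times> real) \<times> (real \<times> real)) measure" and r :: real
    assume F: "Psym F" and ac: "absolutely_continuous lborel F" and r: "0 < r"
    define G where "G = RN_deriv lborel F"
    have [measurable]: "G \<in> borel_measurable (lborel \<Otimes>\<^sub>M lborel)"
      unfolding G_def lborel_prod by simp
    have "(\<integral>\<^sup>+w. dist_powr_weight \<gamma> w \<partial>F) = (\<integral>\<^sup>+w. G w * dist_powr_weight \<gamma> w \<partial>lborel)"
      unfolding G_def using borel_measurable_dist_powr_weight[of \<gamma>]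
      by (intro Psym_RN_deriv(2)[OF F ac]) (simp add: lborel_prod)
    also have "\<dots> \<le> ennreal (C * r powr - \<gamma>) * (\<integral>\<^sup>+w. G w \<partial>lborel)
        + ennreal (C * r powr (a - \<gamma>)) * (\<integral>\<^sup>+z. Phi_energy a (\<lambda>x. G (x, z)) \<partial>lborel)"
      using r by (intro nn_integral_pair_moment_le bound) (simp_all add: G_def)
    also have "\<dots> \<le> ennreal (C * r powr - \<gamma>) + ennreal (C * r powr (a - \<gamma>)) * (4 * Ia2 a F)"
      using nn_integral_Phi_energy_slices_le_Ia2_density[of a G] ac Psym_RN_deriv(1)[OF F ac]
      unfolding Ia2_def G_def[symmetric] by (simp add: mult_left_mono)
    finally show "(\<integral>\<^sup>+w. dist_powr_weight \<gamma> w \<partial>F)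
        \<le> ennreal (C * r powr - \<gamma>) + ennreal (C * r powr (a - \<gamma>)) * (4 * Ia2 a F)" .
  qed
qed

lemma exists_radius_balancing:
  fixes C1 C2 a \<gamma> \<theta> I :: real
  assumes "0 \<le> C1" "0 \<le> C2" "0 < a" "0 \<le> I" "\<gamma> / a \<le> \<theta>"
  shows "\<exists>r>0. C1 * r powr - \<gamma> + C2 * r powr (a - \<gamma>) * I \<le> (C1 + C2) * (1 + I powr \<theta>)"
proof (cases "I \<le> 1")
  case True
  then have "C1 * 1 powr - \<gamma> + C2 * 1 powr (a - \<gamma>) * I \<le> (C1 + C2) * 1"
    using assms mult_left_le[of I C2] by simp
  also have "\<dots> \<le> (C1 + C2) * (1 + I powr \<theta>)"
    using assms by (intro mult_left_mono) auto
  finally show ?thesis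
    by (intro exI[of _ 1]) auto
next
  case False
  define r where "r = I powr (- 1 / a)"
  have "r powr - \<gamma> = I powr (\<gamma> / a)" "r powr (a - \<gamma>) * I = I powr (\<gamma> / a)"
    unfolding r_def using False assms
    by (simp_all add: powr_powr powr_mult_base field_simps)
  then have "C1 * r powr - \<gamma> + C2 * r powr (a - \<gamma>) * I = (C1 + C2) * I powr (\<gamma> / a)"
    by (simp add: algebra_simps)
  also have "\<dots> \<le> (C1 + C2) * (1 + I powr \<theta>)"
  proof -
    have "I powr (\<gamma> / a) \<le> I powr \<theta>"
      using assms False by (intro powr_mono) auto
    then show ?thesis
      using assms by (intro mult_left_mono) auto
  qed
  finally have "C1 * r powr - \<gamma> + C2 * r powr (a - \<gamma>) * I \<le> (C1 + C2) * (1 + I powr \<theta>)" .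
  moreover have "0 < r"
    unfolding r_def using False by simp
  ultimately show ?thesis
    by blast
qed

lemma Psym_moment_le_Ia2_powr:
  fixes a \<gamma> \<theta> :: real
  assumes "0 \<le> \<gamma>" "\<gamma> < a" "\<gamma> < 2" "\<gamma> / a \<le> \<theta>"
  obtains C where "0 < C"
    and "\<And>F. Psym F \<Longrightarrow> Ia2 a F \<noteq> \<infinity> \<Longrightarrow>
      (\<integral>\<^sup>+w. dist_powr_weight \<gamma> w \<partial>F)
        \<le> ennreal (C * (1 + enn2real (Ia2 a F) powr \<theta>))"
proof -
  obtain C where C: "0 \<le> C" and moment: "\<And>F r. Psym F \<Longrightarrow> absolutely_continuous lborel F \<Longrightarrow> 0 < r \<Longrightarrow>
      (\<integral>\<^sup>+w. dist_powr_weight \<gamma> w \<partial>F)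
        \<le> ennreal (C * r powr - \<gamma>) + ennreal (C * r powr (a - \<gamma>)) * (4 * Ia2 a F)"
    by (rule Psym_moment_le[OF assms(1-3)]) (rule that)
  show ?thesis
  proof (rule that)
    show "0 < 1 + 5 * C"
      using C by simp
    fix F assume F: "Psym F" and finite: "Ia2 a F \<noteq> \<infinity>"
    define I where "I = enn2real (Ia2 a F)"
    have ac: "absolutely_continuous lborel F" and I: "Ia2 a F = ennreal I" "0 \<le> I"
      using finite unfolding I_def by (auto simp: Ia2_def less_top split: if_splits)
    obtain r where r: "0 < r" "C * r powr - \<gamma> + 4 * C * r powr (a - \<gamma>) * I \<le> (C + 4 * C) * (1 + I powr \<theta>)"
      using exists_radius_balancing[of C "4 * C" a I \<gamma> \<theta>] C I assms by auto
    have "(\<integral>\<^sup>+w. dist_powr_weight \<gamma> w \<partial>F)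
        \<le> ennreal (C * r powr - \<gamma> + 4 * C * r powr (a - \<gamma>) * I)"
      using moment[OF F ac r(1)] C I by (simp add: ennreal_mult ennreal_plus mult_ac)
    also have "\<dots> \<le> ennreal ((C + 4 * C) * (1 + I powr \<theta>))"
      using r(2) by (rule ennreal_leI)
    also have "\<dots> \<le> ennreal ((1 + 5 * C) * (1 + I powr \<theta>))"
      by (intro ennreal_leI mult_right_mono) auto
    finally show "(\<integral>\<^sup>+w. dist_powr_weight \<gamma> w \<partial>F)
        \<le> ennreal ((1 + 5 * C) * (1 + enn2real (Ia2 a F) powr \<theta>))"
      unfolding I_def .
  qed
qed

theorem lemma3p14:
  fixes a \<gamma> p :: real
  assumes "0 < a" "a < 2" "0 < \<gamma>" "\<gamma> < a"
    and "2 / (2 - \<gamma>) < p" "p < 2 / (2 - a)"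
  shows "\<exists>C > 0. \<forall>F. Psym F \<longrightarrow>
    (\<integral>\<^sup>+ z. (if fst z = snd z then \<infinity> else ennreal (norm (fst z - snd z) powr (- \<gamma>))) \<partial>F)
    \<le> (if Ia2 a F = \<infinity> then \<infinity>
        else ennreal (C * (1 + enn2real (Ia2 a F) powr (1 - (2 / a) * (1 / p - (2 - a) / 2)))))"
proof -
  define \<theta> where "\<theta> = 1 - (2 / a) * (1 / p - (2 - a) / 2)"
  have "0 < p"
    using assms(2-5) by (smt (verit) divide_pos_pos)
  then have "2 / p < 2 - \<gamma>"
    using assms by (simp add: field_simps)
  then have "\<gamma> / a \<le> \<theta>"
    unfolding \<theta>_def using assms by (simp add: field_simps)
  then obtain C where "0 < C" and moment: "\<And>F. Psym F \<Longrightarrow> Ia2 a F \<noteq> \<infinity> \<Longrightarrow>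
      (\<integral>\<^sup>+w. dist_powr_weight \<gamma> w \<partial>F)
        \<le> ennreal (C * (1 + enn2real (Ia2 a F) powr \<theta>))"
    using Psym_moment_le_Ia2_powr[of \<gamma> a \<theta>] assms by auto
  then show ?thesis
    unfolding \<theta>_def dist_powr_weight_def by (intro exI[of _ C]) auto
qed

end
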